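(* Work in the Gödel POMDP described in the context, with a fixed known utility $U$, finite known budget $B$, and the convention that ties are broken in favour of the parent. For every policy $\pi$ (with scoring function $Score_\pi$) and every state $s=(\mathcal{T},a_p,a_c,b)$ with $b>0$, the rule "accept (choose $a_c$) if $\mathrm{CMP}_\pi(s,a_c)>\mathrm{CMP}_\pi(s,a_p)$, otherwise reject (choose $a_p$)" makes the same choice as the Gödel Machine rule "accept iff $Q_\pi(s,a_c)>Q_\pi(s,a_p)$". Consequently, if $\pi^*$ is an optimal policy of the Gödel POMDP, the policy that at every state with $b>0$ chooses $\arg\max_{a\in\{a_p,a_c\}}\mathrm{CMP}_{\pi^*}(s,a)$ (ties to $a_p$), with final scoring function $Score_{\pi^*}$, is optimal; i.e. access to the $\mathrm{CMP}$ oracle suffices to implement the Gödel Machine in this setting.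
   Context: Agents are nodes of a rooted tree; for a tree $\mathcal{T}$ and node $a\in\mathcal{T}$, the clade $C(\mathcal{T},a)$ is the subtree of $\mathcal{T}$ rooted at $a$ (i.e. $a$ and all its descendants). A fixed utility function $U$ assigns to each agent a real number (its expected performance on evaluation tasks, assumed independent of time and history, i.e. repeatable trials); $U$ is known. Each agent $a$ has a (stochastic) self-modification operation producing a new agent $m(a)$, which is added to the tree as a child of $a$; each self-modification costs exactly one unit of budget, and nothing else consumes budget; no reward is received before termination. Gödel POMDP. States are tuples $(\mathcal{T},a_p,a_c,b)$ where $\mathcal{T}$ is a finite tree of agents, $a_p,a_c\in\mathcal{T}$ with $a_c$ a child of $a_p$ (the "parent" and "child"), and $b\in\mathbb{Z}_{\ge 0}$ is the remaining budget. The observation is $(a_p,a_c,b)$. When $b>0$ the action is a choice $a\in\{a_p,a_c\}$ ("reject" $=a_p$, "accept" $=a_c$), and the transition is $(\mathcal{T},a_p,a_c,b)\mapsto(\mathcal{T}\cup\{m(a)\},a,m(a),b-1)$. A policy $\pi$ consists of a (history-dependent) action rule together with a scoring function $Score_\pi$ which, given the final observation $(a_{Bp},a_{Bc},0)$, returns an indicator function on agents equal to $1$ on exactly one of $a_{Bp},a_{Bc}$ and $0$ elsewhere; the final agent is $\arg\max_{a'}Score_\pi(a_{Bp},a_{Bc})(a')$ and the terminal reward is $U$ of that agent. Let $p_\pi(\cdot\mid s,a)$ denote the distribution of the terminal state $(\mathcal{T}_B,a_{Bp},a_{Bc},0)$ obtained by taking action $a$ in state $s$ and following $\pi$ thereafter.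 $Q_\pi(s,a)=\mathbb{E}_{(\mathcal{T}_B,a_{Bp},a_{Bc},0)\sim p_\pi(\cdot\mid s,a)}\big[U(\arg\max_{a'\in\mathcal{T}_B}Score_\pi(a_{Bp},a_{Bc})(a'))\big]$. Clade-metaproductivity: $\mathrm{CMP}_\pi(s,a)=\mathbb{E}_{(\mathcal{T}_B,a_{Bp},a_{Bc},0)\sim p_\pi(\cdot\mid s,a)}\big[U(\arg\max_{a'\in C(\mathcal{T}_B,a)}Score_\pi(a_{Bp},a_{Bc})(a'))\big]$. *)

theory Defs
  imports "HOL-Probability.Probability"
begin

text \<open>
A tree is a list of nodes; node i carries the
agent (label) fst (T!i) and its parent index snd (T!i) (None for the root).
\<close>

type_synonym 'ag tree = "('ag \<times> nat option) list"

text \<open>States (T, a_p, a_c, b): tree, parent node, child node, remaining budget.\<close>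
type_synonym 'ag state = "'ag tree \<times> nat \<times> nat \<times> nat"

type_synonym 'ag obs = "'ag \<times> 'ag \<times> nat"

text \<open>Histories: past observations together with the action taken (True = accept).\<close>
type_synonym 'ag hist = "('ag obs \<times> bool) list"

definition wf_tree :: "'ag tree \<Rightarrow> bool" where
  "wf_tree T \<longleftrightarrow> T \<noteq> [] \<and> snd (T ! 0) = None \<and>
     (\<forall>i. 0 < i \<and> i < length T \<longrightarrow> (\<exists>j<i. snd (T ! i) = Some j))"

definition valid_state :: "'ag state \<Rightarrow> bool" where
  "valid_state s = (case s of (T, p, c, b) \<Rightarrow>
     wf_tree T \<and> p < length T \<and> c < length T \<and> snd (T ! c) = Some p)"

definition nodes :: "'ag tree \<Rightarrow> nat set" where
  "nodes T = {..<length T}"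

definition parent_rel :: "'ag tree \<Rightarrow> (nat \<times> nat) set" where
  "parent_rel T = {(j, i). j < length T \<and> snd (T ! j) = Some i}"

definition clade :: "'ag tree \<Rightarrow> nat \<Rightarrow> nat set" where
  "clade T a = {j. j < length T \<and> (j, a) \<in> (parent_rel T)\<^sup>*}"

definition budget :: "'ag state \<Rightarrow> nat" where
  "budget s = snd (snd (snd s))"

definition obs :: "'ag state \<Rightarrow> 'ag obs" where
  "obs s = (case s of (T, p, c, b) \<Rightarrow> (fst (T ! p), fst (T ! c), b))"

definition act_node :: "'ag state \<Rightarrow> bool \<Rightarrow> nat" where
  "act_node s acc = (case s of (T, p, c, b) \<Rightarrow> if acc then c else p)"

definition step :: "('ag \<Rightarrow> 'ag pmf) \<Rightarrow> 'ag state \<Rightarrow> bool \<Rightarrow> 'ag state pmf" where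
  "step m s acc = (case s of (T, p, c, b) \<Rightarrow>
     (let a = (if acc then c else p) in
      map_pmf (\<lambda>x. (T @ [(x, Some a)], a, length T, b - 1)) (m (fst (T ! a)))))"

primrec runF :: "nat \<Rightarrow> ('ag hist \<Rightarrow> 'ag state \<Rightarrow> bool) \<Rightarrow> ('ag \<Rightarrow> 'ag pmf)
    \<Rightarrow> 'ag hist \<Rightarrow> 'ag state \<Rightarrow> bool \<Rightarrow> 'ag state pmf" where
  "runF 0 rule m h s acc = return_pmf s"
| "runF (Suc n) rule m h s acc =
     bind_pmf (step m s acc)
       (\<lambda>s'. runF n rule m (h @ [(obs s, acc)]) s' (rule (h @ [(obs s, acc)]) s'))"

definition terminal :: "('ag hist \<Rightarrow> 'ag state \<Rightarrow> bool) \<Rightarrow> ('ag \<Rightarrow> 'ag pmf)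
    \<Rightarrow> 'ag hist \<Rightarrow> 'ag state \<Rightarrow> bool \<Rightarrow> 'ag state pmf" where
  "terminal rule m h s acc = runF (budget s) rule m h s acc"

definition obs_rule :: "('ag hist \<Rightarrow> 'ag obs \<Rightarrow> bool) \<Rightarrow> 'ag hist \<Rightarrow> 'ag state \<Rightarrow> bool" where
  "obs_rule act h s = act h (obs s)"

text \<open>Scoring function: sc a_Bp a_Bc = True means the indicator is 1 on a_Bc, otherwise on a_Bp.\<close>
definition score_ind :: "('ag \<Rightarrow> 'ag \<Rightarrow> bool) \<Rightarrow> 'ag state \<Rightarrow> nat \<Rightarrow> real" where
  "score_ind sc s = (case s of (T, p, c, b) \<Rightarrow>
     (\<lambda>x. if x = (if sc (fst (T ! p)) (fst (T ! c)) then c else p) then 1 else 0))"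

definition argmax_on :: "(nat \<Rightarrow> real) \<Rightarrow> nat set \<Rightarrow> nat" where
  "argmax_on f S = (SOME x. x \<in> S \<and> (\<forall>y\<in>S. f y \<le> f x))"

definition tree_of :: "'ag state \<Rightarrow> 'ag tree" where
  "tree_of s = fst s"

definition Qv :: "('ag \<Rightarrow> real) \<Rightarrow> ('ag \<Rightarrow> 'ag pmf) \<Rightarrow> ('ag hist \<Rightarrow> 'ag state \<Rightarrow> bool)
    \<Rightarrow> ('ag \<Rightarrow> 'ag \<Rightarrow> bool) \<Rightarrow> 'ag hist \<Rightarrow> 'ag state \<Rightarrow> bool \<Rightarrow> real" where
  "Qv U m rule sc h s acc = measure_pmf.expectation (terminal rule m h s acc)
     (\<lambda>sB. U (fst (tree_of sB ! argmax_on (score_ind sc sB) (nodes (tree_of sB)))))"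

definition CMP :: "('ag \<Rightarrow> real) \<Rightarrow> ('ag \<Rightarrow> 'ag pmf) \<Rightarrow> ('ag hist \<Rightarrow> 'ag state \<Rightarrow> bool)
    \<Rightarrow> ('ag \<Rightarrow> 'ag \<Rightarrow> bool) \<Rightarrow> 'ag hist \<Rightarrow> 'ag state \<Rightarrow> bool \<Rightarrow> real" where
  "CMP U m rule sc h s acc = measure_pmf.expectation (terminal rule m h s acc)
     (\<lambda>sB. U (fst (tree_of sB ! argmax_on (score_ind sc sB) (clade (tree_of sB) (act_node s acc)))))"

definition policy_value :: "('ag \<Rightarrow> real) \<Rightarrow> ('ag \<Rightarrow> 'ag pmf) \<Rightarrow> ('ag hist \<Rightarrow> 'ag state \<Rightarrow> bool)
    \<Rightarrow> ('ag \<Rightarrow> 'ag \<Rightarrow> bool) \<Rightarrow> 'ag state \<Rightarrow> real" where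
  "policy_value U m rule sc s0 = Qv U m rule sc [] s0 (rule [] s0)"

definition cmp_rule :: "('ag \<Rightarrow> real) \<Rightarrow> ('ag \<Rightarrow> 'ag pmf) \<Rightarrow> ('ag hist \<Rightarrow> 'ag state \<Rightarrow> bool)
    \<Rightarrow> ('ag \<Rightarrow> 'ag \<Rightarrow> bool) \<Rightarrow> 'ag hist \<Rightarrow> 'ag state \<Rightarrow> bool" where
  "cmp_rule U m rule sc h s = (CMP U m rule sc h s True > CMP U m rule sc h s False)"

end

theory Submission imports Defs begin

text \<open>
Every self-modification attaches the new agent below the agent currently selected, so after
at least one step from a node a both the parent and the child position lie in the clade of a.
The score indicator is supported on one of these two positions, hence its argmax over the
clade of a equals its argmax over the whole final tree: CMP and Q coincide whenever b > 0.
The CMP rule of a policy is therefore its greedy rule with respect to Q, and the policy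
improvement argument (induction on the remaining budget) shows that following it everywhere
is at least as good as the policy itself; applied to an optimal policy it is optimal.
\<close>

lemma expectation_bind_pmf_bounded:
  fixes f :: "'b \<Rightarrow> real"
  assumes "\<And>x. \<bar>f x\<bar> \<le> B"
  shows "measure_pmf.expectation (bind_pmf M N) f
       = measure_pmf.expectation M (\<lambda>x. measure_pmf.expectation (N x) f)"
  unfolding measure_pmf_bind
  by (rule integral_bind[where K="count_space UNIV" and B=B and B'=1])
    (use measurable_measure_pmf[of N] assms in
      \<open>auto simp: measure_pmf.emeasure_space_1 measure_pmf.finite_measure_axioms\<close>)

lemma integrable_measure_pmf_bounded:
  fixes f :: "'b \<Rightarrow> real"
  assumes "\<And>x. \<bar>f x\<bar> \<le> B"
  shows "integrable (measure_pmf M) f"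
  by (rule measure_pmf.integrable_const_bound[where B=B]) (use assms in auto)

lemma abs_expectation_pmf_le:
  fixes f :: "'b \<Rightarrow> real"
  assumes "\<And>x. \<bar>f x\<bar> \<le> B"
  shows "\<bar>measure_pmf.expectation M f\<bar> \<le> B"
proof -
  have "\<bar>measure_pmf.expectation M f\<bar> \<le> measure_pmf.expectation M (\<lambda>x. \<bar>f x\<bar>)"
    by (rule integral_abs_bound)
  also have "\<dots> \<le> B"
    by (intro measure_pmf.integral_le_const integrable_measure_pmf_bounded[where B=B])
      (use assms in auto)
  finally show ?thesis .
qed

lemma clade_append_mono: "clade T a \<subseteq> clade (T @ [x]) a"
proof -
  have "parent_rel T \<subseteq> parent_rel (T @ [x])"
    by (auto simp: parent_rel_def nth_append)
  then show ?thesis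
    unfolding clade_def using rtrancl_mono by auto
qed

lemma self_in_clade: "a < length T \<Longrightarrow> a \<in> clade T a"
  by (simp add: clade_def)

lemma appended_child_in_clade:
  assumes "a' \<in> clade T a"
  shows "length T \<in> clade (T @ [(x, Some a')]) a"
proof -
  have "a' \<in> clade (T @ [(x, Some a')]) a"
    using assms clade_append_mono by blast
  moreover have "(length T, a') \<in> parent_rel (T @ [(x, Some a')])"
    by (simp add: parent_rel_def)
  ultimately show ?thesis
    unfolding clade_def by (auto intro: converse_rtrancl_into_rtrancl)
qed

lemma clade_subset_nodes: "clade T a \<subseteq> nodes T"
  by (auto simp: clade_def nodes_def)

definition positions_in_tree :: "'ag state \<Rightarrow> bool" where
  "positions_in_tree s = (case s of (T, p, c, b) \<Rightarrow> p < length T \<and> c < length T)"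

definition positions_in_clade :: "nat \<Rightarrow> 'ag state \<Rightarrow> bool" where
  "positions_in_clade a s = (case s of (T, p, c, b) \<Rightarrow> p \<in> clade T a \<and> c \<in> clade T a)"

lemma valid_state_positions_in_tree: "valid_state s \<Longrightarrow> positions_in_tree s"
  by (cases s) (auto simp: valid_state_def positions_in_tree_def)

lemma step_positions_in_tree:
  "positions_in_tree s \<Longrightarrow> s' \<in> set_pmf (step m s acc) \<Longrightarrow> positions_in_tree s'"
  by (cases s) (auto simp: positions_in_tree_def step_def Let_def)

lemma step_budget: "s' \<in> set_pmf (step m s acc) \<Longrightarrow> budget s' = budget s - 1"
  by (cases s) (auto simp: budget_def step_def Let_def)

lemma step_positions_in_clade:
  "positions_in_clade a s \<Longrightarrow> s' \<in> set_pmf (step m s acc) \<Longrightarrow> positions_in_clade a s'"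
  by (cases s) (auto simp: positions_in_clade_def step_def Let_def
      dest: subsetD[OF clade_append_mono] intro: appended_child_in_clade)

lemma step_positions_in_clade_of_chosen:
  "positions_in_tree s \<Longrightarrow> s' \<in> set_pmf (step m s acc)
    \<Longrightarrow> positions_in_clade (act_node s acc) s'"
  by (cases s) (auto simp: positions_in_tree_def positions_in_clade_def act_node_def step_def
      Let_def self_in_clade intro: subsetD[OF clade_append_mono] appended_child_in_clade)

lemma runF_positions_in_clade:
  "positions_in_clade a s \<Longrightarrow> sB \<in> set_pmf (runF n r m h s acc) \<Longrightarrow> positions_in_clade a sB"
  by (induction n arbitrary: h s acc) (auto dest: step_positions_in_clade)

lemma terminal_positions_in_clade:
  assumes "positions_in_tree s" "budget s > 0" "sB \<in> set_pmf (terminal r m h s acc)"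
  shows "positions_in_clade (act_node s acc) sB"
proof -
  obtain n where "budget s = Suc n"
    using assms(2) gr0_implies_Suc by blast
  then show ?thesis
    using assms(1,3) unfolding terminal_def
    by (auto intro: runF_positions_in_clade dest: step_positions_in_clade_of_chosen)
qed

lemma argmax_on_indicator:
  "x \<in> S \<Longrightarrow> argmax_on (\<lambda>z. if z = x then (1::real) else 0) S = x"
  unfolding argmax_on_def by (rule some_equality) (auto split: if_splits)

lemma argmax_score_ind:
  assumes "p \<in> S" "c \<in> S"
  shows "argmax_on (score_ind sc (T, p, c, b)) S = (if sc (fst (T ! p)) (fst (T ! c)) then c else p)"
  using assms by (simp add: score_ind_def argmax_on_indicator)

lemma CMP_eq_Qv:
  assumes "positions_in_tree s" "budget s > 0"
  shows "CMP U m r sc h s acc = Qv U m r sc h s acc"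
  unfolding CMP_def Qv_def
proof (intro integral_cong_AE)
  show "AE sB in terminal r m h s acc.
          U (fst (tree_of sB ! argmax_on (score_ind sc sB) (clade (tree_of sB) (act_node s acc))))
        = U (fst (tree_of sB ! argmax_on (score_ind sc sB) (nodes (tree_of sB))))"
  proof (subst AE_measure_pmf_iff, intro ballI)
    fix sB assume "sB \<in> set_pmf (terminal r m h s acc)"
    moreover obtain T p c b where sB: "sB = (T, p, c, b)"
      by (cases sB)
    ultimately have "p \<in> clade T (act_node s acc)" "c \<in> clade T (act_node s acc)"
      using assms terminal_positions_in_clade unfolding positions_in_clade_def by fastforce+
    moreover from this have "p \<in> nodes T" "c \<in> nodes T"
      using clade_subset_nodes by blast+
    ultimately show "U (fst (tree_of sB ! argmax_on (score_ind sc sB) (clade (tree_of sB) (act_node s acc))))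
             = U (fst (tree_of sB ! argmax_on (score_ind sc sB) (nodes (tree_of sB))))"
      by (simp add: sB tree_of_def argmax_score_ind)
  qed
qed simp_all

definition final_utility :: "('ag \<Rightarrow> real) \<Rightarrow> ('ag \<Rightarrow> 'ag \<Rightarrow> bool) \<Rightarrow> 'ag state \<Rightarrow> real" where
  "final_utility U sc sB = U (fst (tree_of sB ! argmax_on (score_ind sc sB) (nodes (tree_of sB))))"

definition Q_horizon :: "('ag \<Rightarrow> real) \<Rightarrow> ('ag \<Rightarrow> 'ag pmf) \<Rightarrow> ('ag hist \<Rightarrow> 'ag state \<Rightarrow> bool)
    \<Rightarrow> ('ag \<Rightarrow> 'ag \<Rightarrow> bool) \<Rightarrow> nat \<Rightarrow> 'ag hist \<Rightarrow> 'ag state \<Rightarrow> bool \<Rightarrow> real" where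
  "Q_horizon U m r sc n h s acc = measure_pmf.expectation (runF n r m h s acc) (final_utility U sc)"

lemma Qv_eq_Q_horizon: "Qv U m r sc h s acc = Q_horizon U m r sc (budget s) h s acc"
  by (simp add: Qv_def Q_horizon_def terminal_def final_utility_def[abs_def])

lemma Q_horizon_0: "Q_horizon U m r sc 0 h s acc = final_utility U sc s"
  by (simp add: Q_horizon_def)

lemma Q_horizon_Suc:
  assumes "\<And>x. \<bar>U x\<bar> \<le> B"
  shows "Q_horizon U m r sc (Suc n) h s acc = measure_pmf.expectation (step m s acc)
     (\<lambda>s'. Q_horizon U m r sc n (h @ [(obs s, acc)]) s' (r (h @ [(obs s, acc)]) s'))"
  unfolding Q_horizon_def runF.simps
  by (rule expectation_bind_pmf_bounded[where B=B]) (simp add: final_utility_def assms)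

lemma abs_Q_horizon_le:
  assumes "\<And>x. \<bar>U x\<bar> \<le> B"
  shows "\<bar>Q_horizon U m r sc n h s acc\<bar> \<le> B"
  unfolding Q_horizon_def by (rule abs_expectation_pmf_le) (simp add: final_utility_def assms)

lemma Q_horizon_le_cmp_choice:
  assumes "positions_in_tree s" "budget s = n"
  shows "Q_horizon U m r sc n h s acc \<le> Q_horizon U m r sc n h s (cmp_rule U m r sc h s)"
proof (cases n)
  case 0
  then show ?thesis by (simp add: Q_horizon_0)
next
  case (Suc k)
  then have "CMP U m r sc h s acc' = Q_horizon U m r sc n h s acc'" for acc'
    using assms CMP_eq_Qv Qv_eq_Q_horizon by (metis zero_less_Suc)
  then show ?thesis
    unfolding cmp_rule_def
    by (cases acc; cases "Q_horizon U m r sc n h s False < Q_horizon U m r sc n h s True") auto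
qed

lemma Q_horizon_le_cmp_rule:
  assumes U_bound: "\<And>x. \<bar>U x\<bar> \<le> B"
  shows "positions_in_tree s \<Longrightarrow> budget s = n \<Longrightarrow>
    Q_horizon U m r sc n h s acc \<le> Q_horizon U m (cmp_rule U m r sc) sc n h s acc"
proof (induction n arbitrary: h s acc)
  case 0
  then show ?case by (simp add: Q_horizon_0)
next
  case (Suc n)
  let ?h = "h @ [(obs s, acc)]"
  let ?g = "cmp_rule U m r sc"
  have bounded: "\<bar>Q_horizon U m r' sc n ?h s' acc'\<bar> \<le> B" for r' s' acc'
    using abs_Q_horizon_le[OF U_bound] .
  have "Q_horizon U m r sc (Suc n) h s acc
      = measure_pmf.expectation (step m s acc) (\<lambda>s'. Q_horizon U m r sc n ?h s' (r ?h s'))"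
    by (rule Q_horizon_Suc[OF U_bound])
  also have "\<dots> \<le> measure_pmf.expectation (step m s acc)
                    (\<lambda>s'. Q_horizon U m ?g sc n ?h s' (?g ?h s'))"
  proof (rule integral_mono_AE)
    show "AE s' in step m s acc.
            Q_horizon U m r sc n ?h s' (r ?h s') \<le> Q_horizon U m ?g sc n ?h s' (?g ?h s')"
    proof (subst AE_measure_pmf_iff, intro ballI)
      fix s' assume s': "s' \<in> set_pmf (step m s acc)"
      then have s'_inv: "positions_in_tree s'" "budget s' = n"
        using Suc.prems step_positions_in_tree[OF _ s'] step_budget[OF s'] by auto
      have "Q_horizon U m r sc n ?h s' (r ?h s') \<le> Q_horizon U m r sc n ?h s' (?g ?h s')"
        by (rule Q_horizon_le_cmp_choice[OF s'_inv])
      also have "\<dots> \<le> Q_horizon U m ?g sc n ?h s' (?g ?h s')"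
        by (rule Suc.IH[OF s'_inv])
      finally show "Q_horizon U m r sc n ?h s' (r ?h s') \<le> Q_horizon U m ?g sc n ?h s' (?g ?h s')" .
    qed
  qed (intro integrable_measure_pmf_bounded[where B=B] bounded)+
  also have "\<dots> = Q_horizon U m ?g sc (Suc n) h s acc"
    by (rule Q_horizon_Suc[OF U_bound, symmetric])
  finally show ?case .
qed

theorem theorem1:
  fixes U :: "'ag \<Rightarrow> real" and m :: "'ag \<Rightarrow> 'ag pmf" and s0 :: "'ag state"
    and act_opt :: "'ag hist \<Rightarrow> 'ag obs \<Rightarrow> bool" and sc_opt :: "'ag \<Rightarrow> 'ag \<Rightarrow> bool"
  assumes bounded_U: "bounded (range U)"
    and valid0: "valid_state s0"
    and optimal: "\<And>act sc. policy_value U m (obs_rule act) sc s0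
                              \<le> policy_value U m (obs_rule act_opt) sc_opt s0"
  shows "(\<forall>act sc h s. valid_state s \<and> budget s > 0 \<longrightarrow>
            (CMP U m (obs_rule act) sc h s True > CMP U m (obs_rule act) sc h s False
             \<longleftrightarrow> Qv U m (obs_rule act) sc h s True > Qv U m (obs_rule act) sc h s False))
       \<and> (\<forall>act sc. policy_value U m (obs_rule act) sc s0
            \<le> policy_value U m (cmp_rule U m (obs_rule act_opt) sc_opt) sc_opt s0)"
proof
  show "\<forall>act sc h s. valid_state s \<and> budget s > 0 \<longrightarrow>
          (CMP U m (obs_rule act) sc h s True > CMP U m (obs_rule act) sc h s False
           \<longleftrightarrow> Qv U m (obs_rule act) sc h s True > Qv U m (obs_rule act) sc h s False)"
    using CMP_eq_Qv valid_state_positions_in_tree by metis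
  obtain B where B: "\<And>x. \<bar>U x\<bar> \<le> B"
    using bounded_U unfolding bounded_iff by auto
  let ?r = "obs_rule act_opt"
  let ?g = "cmp_rule U m ?r sc_opt"
  have s0_inv: "positions_in_tree s0"
    using valid0 by (rule valid_state_positions_in_tree)
  have "policy_value U m ?r sc_opt s0 = Q_horizon U m ?r sc_opt (budget s0) [] s0 (?r [] s0)"
    by (simp add: policy_value_def Qv_eq_Q_horizon)
  also have "\<dots> \<le> Q_horizon U m ?r sc_opt (budget s0) [] s0 (?g [] s0)"
    by (rule Q_horizon_le_cmp_choice[OF s0_inv refl])
  also have "\<dots> \<le> Q_horizon U m ?g sc_opt (budget s0) [] s0 (?g [] s0)"
    by (rule Q_horizon_le_cmp_rule[OF B s0_inv refl])
  also have "\<dots> = policy_value U m ?g sc_opt s0"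
    by (simp add: policy_value_def Qv_eq_Q_horizon)
  finally show "\<forall>act sc. policy_value U m (obs_rule act) sc s0 \<le> policy_value U m ?g sc_opt s0"
    using optimal order_trans by blast
qed

end
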